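(* Let $(E,\tau)$ be a locally solid vector lattice, where $\tau$ is a Fatou topology. Suppose that the carrier $C_\tau$ has a countable order basis. Then $C_\tau=E$.
   Context: All vector lattices are real and Archimedean; linear topologies are Hausdorff. A locally solid topology on a vector lattice is a linear topology such that zero has a neighbourhood basis of solid sets. A subset is order closed if it contains the order limits of nets in it (a net $x_\alpha$ order converges to $x$ if there is a net $y_\beta\downarrow0$ such that for each $\beta_0$ eventually $|x_\alpha-x|\leq y_{\beta_0}$). A Fatou topology is a locally solid topology in which zero has a neighbourhood basis of order closed solid sets. A sequence $(V_n)$ of neighbourhoods of zero is normal if $V_{n+1}+V_{n+1}\subseteq V_n$; the carrier $C_\tau$ is the union of the disjoint complements $N^{\mathrm d}$ (in $E$) where $N=\bigcap_n V_n$ ranges over intersections of normal sequences of solid $\tau$-neighbourhoods of zero. A non-empty subset $A$ of a vector lattice $G$ is an order basis of $G$ if $A^{\mathrm d}=\{0\}$ in $G$. *)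

theory Defs
  imports "HOL-Analysis.Analysis"
begin

definition vl_abs :: "'a::{ordered_real_vector,lattice} \<Rightarrow> 'a" where
  "vl_abs x = sup x (- x)"

definition archimedean_vl :: "'a::{ordered_real_vector,lattice} itself \<Rightarrow> bool" where
  "archimedean_vl _ \<longleftrightarrow>
     (\<forall>x y :: 'a. 0 \<le> x \<and> (\<forall>n::nat. real n *\<^sub>R x \<le> y) \<longrightarrow> x = 0)"

definition solid :: "'a::{ordered_real_vector,lattice} set \<Rightarrow> bool" where
  "solid S \<longleftrightarrow> (\<forall>x y. y \<in> S \<and> vl_abs x \<le> vl_abs y \<longrightarrow> x \<in> S)"

definition linear_topology :: "'a::{ordered_real_vector,lattice} topology \<Rightarrow> bool" where
  "linear_topology \<tau> \<longleftrightarrow>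
     topspace \<tau> = UNIV \<and> Hausdorff_space \<tau> \<and>
     continuous_map (prod_topology \<tau> \<tau>) \<tau> (\<lambda>(x, y). x + y) \<and>
     continuous_map (prod_topology euclideanreal \<tau>) \<tau> (\<lambda>(c, x). c *\<^sub>R x)"

definition nhd0 :: "'a::{ordered_real_vector,lattice} topology \<Rightarrow> 'a set \<Rightarrow> bool" where
  "nhd0 \<tau> U \<longleftrightarrow> (\<exists>V. openin \<tau> V \<and> 0 \<in> V \<and> V \<subseteq> U)"

definition locally_solid :: "'a::{ordered_real_vector,lattice} topology \<Rightarrow> bool" where
  "locally_solid \<tau> \<longleftrightarrow> linear_topology \<tau> \<and>
     (\<forall>U. nhd0 \<tau> U \<longrightarrow> (\<exists>S. nhd0 \<tau> S \<and> solid S \<and> S \<subseteq> U))"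

text \<open>Nets are represented by (proper) filters, as usual in Isabelle:
  a net \<open>x\<^sub>\<alpha>\<close> corresponds to its eventuality filter.  A net \<open>y\<^sub>\<beta> \<down> 0\<close> is represented by
  its range \<open>D\<close>, a nonempty downward directed set with infimum 0.\<close>
definition dec_to_zero :: "'a::{ordered_real_vector,lattice} set \<Rightarrow> bool" where
  "dec_to_zero D \<longleftrightarrow> D \<noteq> {} \<and>
     (\<forall>a\<in>D. \<forall>b\<in>D. \<exists>c\<in>D. c \<le> a \<and> c \<le> b) \<and>
     (\<forall>d\<in>D. 0 \<le> d) \<and> (\<forall>z. (\<forall>d\<in>D. z \<le> d) \<longrightarrow> z \<le> 0)"

definition order_converges :: "'a filter \<Rightarrow> 'a::{ordered_real_vector,lattice} \<Rightarrow> bool" where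
  "order_converges F x \<longleftrightarrow>
     (\<exists>D. dec_to_zero D \<and> (\<forall>d\<in>D. eventually (\<lambda>z. vl_abs (z - x) \<le> d) F))"

definition order_closed :: "'a::{ordered_real_vector,lattice} set \<Rightarrow> bool" where
  "order_closed A \<longleftrightarrow>
     (\<forall>F x. F \<noteq> bot \<and> eventually (\<lambda>z. z \<in> A) F \<and> order_converges F x \<longrightarrow> x \<in> A)"

definition fatou_topology :: "'a::{ordered_real_vector,lattice} topology \<Rightarrow> bool" where
  "fatou_topology \<tau> \<longleftrightarrow> locally_solid \<tau> \<and>
     (\<forall>U. nhd0 \<tau> U \<longrightarrow> (\<exists>S. nhd0 \<tau> S \<and> solid S \<and> order_closed S \<and> S \<subseteq> U))"

definition disj_compl :: "'a::{ordered_real_vector,lattice} set \<Rightarrow> 'a set" where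
  "disj_compl N = {x. \<forall>y\<in>N. inf (vl_abs x) (vl_abs y) = 0}"

definition normal_solid_seq :: "'a::{ordered_real_vector,lattice} topology \<Rightarrow> (nat \<Rightarrow> 'a set) \<Rightarrow> bool" where
  "normal_solid_seq \<tau> V \<longleftrightarrow>
     (\<forall>n. nhd0 \<tau> (V n) \<and> solid (V n) \<and>
          {a + b | a b. a \<in> V (Suc n) \<and> b \<in> V (Suc n)} \<subseteq> V n)"

definition carrier_top :: "'a::{ordered_real_vector,lattice} topology \<Rightarrow> 'a set" where
  "carrier_top \<tau> = \<Union>{disj_compl (\<Inter>n. V n) | V. normal_solid_seq \<tau> V}"

definition order_basis :: "'a::{ordered_real_vector,lattice} set \<Rightarrow> 'a set \<Rightarrow> bool" where
  "order_basis G A \<longleftrightarrow> A \<noteq> {} \<and> A \<subseteq> G \<and> G \<inter> disj_compl A = {0}"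

end

(*
  Enumerate the countable order basis A of the carrier as a_0, a_1, ...; each a_n is disjoint
  from the intersection of some normal sequence V_n.  A normal sequence U with
  U_k contained in the k-th terms of V_0, ..., V_k (a diagonal refinement) has intersection N
  disjoint from all of A.

  On the other hand the carrier is order dense: for y <> 0 the Hausdorff property gives a
  normal sequence of order closed solid sets whose intersection N' misses y.  N' is an order
  closed ideal, hence a band in the Archimedean lattice, so |y| is not in the second disjoint
  complement of N', which yields 0 < w <= |y| disjoint from N' and so w in the carrier.

  If N contained some y <> 0, such a w would lie in the solid set N, hence in the carrier and
  disjoint from A, i.e. w = 0.  So N = {0}, and its disjoint complement E lies in the carrier.
*)

theory Submission
  imports Defs
begin

lemma vl_abs_nonneg_eq: "0 \<le> x \<Longrightarrow> vl_abs (x::'a::{ordered_real_vector,lattice}) = x"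
  unfolding vl_abs_def by (metis neg_le_0_iff_le order_trans sup_absorb1)

lemma vl_abs_nonneg: "0 \<le> vl_abs (x::'a::{ordered_real_vector,lattice})"
proof -
  let ?s = "vl_abs x"
  have "x + -x \<le> ?s + ?s"
    unfolding vl_abs_def by (rule add_mono) simp_all
  then have "0 \<le> (1/2::real) *\<^sub>R (?s + ?s)"
    by (intro scaleR_nonneg_nonneg[rotated]) simp_all
  also have "(1/2::real) *\<^sub>R (?s + ?s) = ?s"
    by (simp flip: scaleR_2)
  finally show ?thesis .
qed

lemma vl_abs_idem [simp]: "vl_abs (vl_abs (x::'a::{ordered_real_vector,lattice})) = vl_abs x"
  by (simp add: vl_abs_nonneg vl_abs_nonneg_eq)

lemma vl_abs_minus_commute: "vl_abs (x - y) = vl_abs (y - (x::'a::{ordered_real_vector,lattice}))"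
  unfolding vl_abs_def by (simp add: sup_commute)

lemma solidD: "solid S \<Longrightarrow> y \<in> S \<Longrightarrow> vl_abs x \<le> vl_abs y \<Longrightarrow> x \<in> S"
  unfolding solid_def by blast

lemma solid_nonneg_below: "solid S \<Longrightarrow> y \<in> S \<Longrightarrow> 0 \<le> x \<Longrightarrow> x \<le> vl_abs y \<Longrightarrow> x \<in> S"
  by (simp add: solidD vl_abs_nonneg_eq)

lemma disj_compl_antimono: "M \<subseteq> N \<Longrightarrow> disj_compl N \<subseteq> disj_compl M"
  unfolding disj_compl_def by blast

lemma solid_Inter: "(\<And>k. solid (V k)) \<Longrightarrow> solid (\<Inter>k. V k)"
  unfolding solid_def by blast

lemma disj_compl_sym: "A \<subseteq> disj_compl N \<longleftrightarrow> N \<subseteq> disj_compl A"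
  unfolding disj_compl_def by (blast intro: inf_commute[THEN trans])

lemma disj_compl_subset_zero: "N \<subseteq> {0} \<Longrightarrow> disj_compl N = UNIV"
  unfolding disj_compl_def vl_abs_def by (auto simp: inf_absorb2 vl_abs_nonneg[unfolded vl_abs_def])

lemma solid_disj_compl: "solid (disj_compl N)"
  unfolding solid_def disj_compl_def
proof (clarsimp)
  fix x y z assume "\<forall>z\<in>N. inf (vl_abs y) (vl_abs z) = 0" "vl_abs x \<le> vl_abs y" "z \<in> N"
  then have "inf (vl_abs x) (vl_abs z) \<le> 0"
    by (metis inf_mono order_refl)
  then show "inf (vl_abs x) (vl_abs z) = 0"
    by (simp add: order_antisym vl_abs_nonneg)
qed

lemma exists_disj_compl_below:
  assumes "u \<notin> disj_compl (disj_compl N)"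
  shows "\<exists>w\<in>disj_compl N. 0 \<le> w \<and> w \<le> vl_abs u \<and> w \<noteq> 0"
proof -
  obtain z where z: "z \<in> disj_compl N" and uz: "inf (vl_abs u) (vl_abs z) \<noteq> 0"
    using assms unfolding disj_compl_def by blast
  let ?w = "inf (vl_abs u) (vl_abs z)"
  have "?w \<in> disj_compl N"
    using solid_disj_compl z by (rule solid_nonneg_below) (simp_all add: vl_abs_nonneg)
  then show ?thesis
    using uz by (intro bexI[of _ ?w]) (simp_all add: vl_abs_nonneg)
qed

definition lattice_ideal :: "'a::{ordered_real_vector,lattice} set \<Rightarrow> bool" where
  "lattice_ideal B \<longleftrightarrow> solid B \<and> 0 \<in> B \<and> (\<forall>a\<in>B. \<forall>b\<in>B. a + b \<in> B)"

lemma lattice_ideal_sup: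
  assumes B: "lattice_ideal B" and "a \<in> B" "b \<in> B" "0 \<le> a" "0 \<le> b"
  shows "sup a b \<in> B"
proof -
  have "a + b \<in> B" "solid B"
    using assms unfolding lattice_ideal_def by blast+
  moreover have "sup a b \<le> vl_abs (a + b)"
    using assms by (simp add: vl_abs_nonneg_eq add_increasing add_increasing2)
  ultimately show ?thesis
    using \<open>0 \<le> a\<close> by (auto intro: solid_nonneg_below le_supI1)
qed

lemma lattice_ideal_multiples: "lattice_ideal B \<Longrightarrow> v \<in> B \<Longrightarrow> real n *\<^sub>R v \<in> B"
  unfolding lattice_ideal_def by (induction n) (simp_all add: scaleR_left_distrib)

lemma double_disj_compl_least_upper_bound:
  assumes arch: "archimedean_vl TYPE('a)"
    and B: "lattice_ideal (B :: 'a::{ordered_real_vector,lattice} set)"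
    and u0: "0 \<le> u" and u: "u \<in> disj_compl (disj_compl B)"
    and w: "\<And>v. v \<in> B \<Longrightarrow> 0 \<le> v \<Longrightarrow> v \<le> u \<Longrightarrow> v \<le> w"
  shows "u \<le> w"
proof -
  define e where "e = u - inf w u"
  have w0: "0 \<le> w"
    using w[of 0] B u0 unfolding lattice_ideal_def by blast
  have e: "0 \<le> e" "e \<le> u"
    using w0 u0 by (simp_all add: e_def)
  have "inf e (vl_abs b) = 0" if b: "b \<in> B" for b
  proof -
    define v where "v = inf e (vl_abs b)"
    have v0: "0 \<le> v" and vB: "v \<in> B"
      using e B b unfolding v_def lattice_ideal_def
      by (auto simp: vl_abs_nonneg intro: solid_nonneg_below)
    \<comment> \<open>n v + v \<le> inf w u + e = u, so (n + 1) v lies in B \<inter> [0, u] and hence below w\<close>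
    have "real n *\<^sub>R v \<le> inf w u" for n
    proof (induction n)
      case 0
      show ?case using w0 u0 by simp
    next
      case (Suc n)
      have "real n *\<^sub>R v + v \<le> inf w u + e"
        using Suc.IH by (rule add_mono) (simp add: v_def)
      then have le_u: "real (Suc n) *\<^sub>R v \<le> u"
        by (simp add: e_def scaleR_left_distrib add_ac)
      moreover have "real (Suc n) *\<^sub>R v \<le> w"
        using v0 by (intro w[OF lattice_ideal_multiples[OF B vB] _ le_u] scaleR_nonneg_nonneg) simp_all
      ultimately show ?case by simp
    qed
    then show ?thesis
      using arch v0 unfolding archimedean_vl_def v_def by blast
  qed
  then have "e \<in> disj_compl B"
    using e unfolding disj_compl_def by (simp add: vl_abs_nonneg_eq)
  then have "inf (vl_abs u) (vl_abs e) = 0"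
    using u unfolding disj_compl_def by blast
  then have "inf u e = 0"
    using e u0 by (simp add: vl_abs_nonneg_eq)
  then have "e = 0"
    using e by (simp add: inf_absorb2)
  then show ?thesis
    by (metis e_def eq_iff_diff_eq_0 inf.cobounded1)
qed

lemma dec_to_zero_diff_Sup:
  fixes D :: "'a::{ordered_real_vector,lattice} set"
  assumes ne: "D \<noteq> {}"
    and directed: "\<And>a b. a \<in> D \<Longrightarrow> b \<in> D \<Longrightarrow> \<exists>c\<in>D. a \<le> c \<and> b \<le> c"
    and upper: "\<And>v. v \<in> D \<Longrightarrow> v \<le> u"
    and least: "\<And>w. (\<And>v. v \<in> D \<Longrightarrow> v \<le> w) \<Longrightarrow> u \<le> w"
  shows "dec_to_zero ((\<lambda>v. u - v) ` D)"
  unfolding dec_to_zero_def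
proof (intro conjI ballI allI impI)
  let ?D = "(\<lambda>v. u - v) ` D"
  show "?D \<noteq> {}" using ne by blast
  show "0 \<le> d" if "d \<in> ?D" for d
    using that upper by auto
  show "\<exists>c\<in>?D. c \<le> d \<and> c \<le> d'" if d: "d \<in> ?D" "d' \<in> ?D" for d d'
  proof -
    obtain a b where "a \<in> D" "b \<in> D" "d = u - a" "d' = u - b"
      using d by blast
    moreover obtain c where "c \<in> D" "a \<le> c" "b \<le> c"
      using directed[OF \<open>a \<in> D\<close> \<open>b \<in> D\<close>] by blast
    ultimately show ?thesis
      by (intro bexI[of _ "u - c"]) (simp_all add: diff_left_mono)
  qed
  fix z assume "\<forall>d\<in>?D. z \<le> d"
  then have "u \<le> u - z"
    by (intro least) (auto simp: le_diff_eq add.commute)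
  then show "z \<le> 0" by simp
qed

lemma directed_order_converges_Sup:
  fixes D :: "'a::{ordered_real_vector,lattice} set"
  assumes ne: "D \<noteq> {}"
    and directed: "\<And>a b. a \<in> D \<Longrightarrow> b \<in> D \<Longrightarrow> \<exists>c\<in>D. a \<le> c \<and> b \<le> c"
    and upper: "\<And>v. v \<in> D \<Longrightarrow> v \<le> u"
    and least: "\<And>w. (\<And>v. v \<in> D \<Longrightarrow> v \<le> w) \<Longrightarrow> u \<le> w"
  shows "\<exists>F. F \<noteq> bot \<and> eventually (\<lambda>z. z \<in> D) F \<and> order_converges F u"
proof (intro exI conjI)
  \<comment> \<open>the tail filter of the net (v) indexed by D itself\<close>
  define F where "F = (INF v\<in>D. principal {x\<in>D. v \<le> x})"
  have ev: "eventually P F \<longleftrightarrow> (\<exists>v\<in>D. \<forall>x\<in>D. v \<le> x \<longrightarrow> P x)" for P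
  proof -
    have "\<exists>c\<in>D. principal {x\<in>D. c \<le> x} \<le> inf (principal {x\<in>D. a \<le> x}) (principal {x\<in>D. b \<le> x})"
      if "a \<in> D" "b \<in> D" for a b
      using directed[OF that] by (auto intro: order_trans)
    then show ?thesis
      unfolding F_def by (subst eventually_INF_base) (auto simp: ne eventually_principal)
  qed
  show "F \<noteq> bot"
    using ev[of "\<lambda>_. False"] by auto
  show "eventually (\<lambda>z. z \<in> D) F"
    using ev ne by blast
  have "vl_abs (x - u) = u - x" if "x \<in> D" for x
    using upper[OF that] by (simp add: vl_abs_minus_commute vl_abs_nonneg_eq)
  then have "eventually (\<lambda>z. vl_abs (z - u) \<le> d) F" if "d \<in> (\<lambda>v. u - v) ` D" for d
    using that unfolding ev by (auto intro: diff_left_mono)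
  then show "order_converges F u"
    unfolding order_converges_def
    using dec_to_zero_diff_Sup[OF assms] by blast
qed

lemma order_closed_ideal_double_disj_compl:
  assumes arch: "archimedean_vl TYPE('a)"
    and B: "lattice_ideal (B :: 'a::{ordered_real_vector,lattice} set)" "order_closed B"
    and u0: "0 \<le> u" and u: "u \<in> disj_compl (disj_compl B)"
  shows "u \<in> B"
proof -
  define D where "D = {v \<in> B. 0 \<le> v \<and> v \<le> u}"
  have "\<exists>F. F \<noteq> bot \<and> eventually (\<lambda>z. z \<in> D) F \<and> order_converges F u"
  proof (rule directed_order_converges_Sup)
    show "D \<noteq> {}"
      using B u0 unfolding D_def lattice_ideal_def by blast
    show "\<exists>c\<in>D. a \<le> c \<and> b \<le> c" if "a \<in> D" "b \<in> D" for a b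
      using that lattice_ideal_sup[OF B(1)] unfolding D_def
      by (intro bexI[of _ "sup a b"]) (simp_all add: le_supI1)
    show "u \<le> w" if "\<And>v. v \<in> D \<Longrightarrow> v \<le> w" for w
      using double_disj_compl_least_upper_bound[OF arch B(1) u0 u] that unfolding D_def by blast
  qed (simp add: D_def)
  then show ?thesis
    using B(2) unfolding order_closed_def D_def by (auto elim!: eventually_mono)
qed

lemma nhd0_Int: "nhd0 \<tau> A \<Longrightarrow> nhd0 \<tau> B \<Longrightarrow> nhd0 \<tau> (A \<inter> B)"
  unfolding nhd0_def by (meson Int_iff Int_mono openin_Int)

lemma nhd0_zero_mem: "nhd0 \<tau> A \<Longrightarrow> 0 \<in> A"
  unfolding nhd0_def by blast

lemma nhd0_INT_atMost: "(\<And>n. n \<le> k \<Longrightarrow> nhd0 \<tau> (V n)) \<Longrightarrow> nhd0 \<tau> (\<Inter>n\<in>{..k::nat}. V n)"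
  by (induction k) (simp_all add: atMost_Suc nhd0_Int)

lemma linear_topology_nhd0_UNIV: "linear_topology \<tau> \<Longrightarrow> nhd0 \<tau> UNIV"
  unfolding linear_topology_def nhd0_def by (metis openin_topspace top_greatest UNIV_I)

lemma linear_topology_nhd0_not_mem:
  assumes "linear_topology \<tau>" "y \<noteq> 0"
  shows "\<exists>G. nhd0 \<tau> G \<and> y \<notin> G"
proof -
  have "Hausdorff_space \<tau>" "topspace \<tau> = UNIV"
    using assms(1) unfolding linear_topology_def by auto
  then obtain G H where "openin \<tau> G" "openin \<tau> H" "0 \<in> G" "y \<in> H" "disjnt G H"
    using assms(2) unfolding Hausdorff_space_def by (metis UNIV_I)
  then show ?thesis
    unfolding nhd0_def disjnt_def by blast
qed

lemma linear_topology_nhd0_half: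
  assumes "linear_topology \<tau>" "nhd0 \<tau> Z"
  shows "\<exists>Z'. nhd0 \<tau> Z' \<and> (\<forall>a\<in>Z'. \<forall>b\<in>Z'. a + b \<in> Z)"
proof -
  obtain G where G: "openin \<tau> G" "0 \<in> G" "G \<subseteq> Z"
    using assms(2) unfolding nhd0_def by blast
  have "topspace \<tau> = UNIV" and "continuous_map (prod_topology \<tau> \<tau>) \<tau> (\<lambda>(x, y). x + y)"
    using assms(1) unfolding linear_topology_def by auto
  then have "openin (prod_topology \<tau> \<tau>) {p. (\<lambda>(x, y). x + y) p \<in> G}"
    using G(1) unfolding continuous_map_def by auto
  moreover have "(0, 0) \<in> {p. (\<lambda>(x, y). x + y) p \<in> G}"
    using G(2) by simp
  ultimately obtain P P' where "openin \<tau> P" "openin \<tau> P'" "0 \<in> P" "0 \<in> P'"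
      "P \<times> P' \<subseteq> {p. (\<lambda>(x, y). x + y) p \<in> G}"
    unfolding openin_prod_topology_alt by metis
  then show ?thesis
    using G(3) unfolding nhd0_def by (intro exI[of _ "P \<inter> P'"]) (auto intro: openin_Int)
qed

lemma fatou_topology_linear: "fatou_topology \<tau> \<Longrightarrow> linear_topology \<tau>"
  unfolding fatou_topology_def locally_solid_def by blast

lemma fatou_topology_nhd0_half:
  assumes "fatou_topology \<tau>" "nhd0 \<tau> Z"
  shows "\<exists>S. nhd0 \<tau> S \<and> solid S \<and> order_closed S \<and> (\<forall>a\<in>S. \<forall>b\<in>S. a + b \<in> Z)"
proof -
  obtain Z' where "nhd0 \<tau> Z'" and Z': "\<forall>a\<in>Z'. \<forall>b\<in>Z'. a + b \<in> Z"
    using linear_topology_nhd0_half[OF fatou_topology_linear] assms by blast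
  then obtain S where "nhd0 \<tau> S" "solid S" "order_closed S" "S \<subseteq> Z'"
    using assms(1) unfolding fatou_topology_def by blast
  then show ?thesis
    using Z' by blast
qed

lemma normal_solid_seq_add:
  "normal_solid_seq \<tau> V \<Longrightarrow> a \<in> V (Suc n) \<Longrightarrow> b \<in> V (Suc n) \<Longrightarrow> a + b \<in> V n"
  unfolding normal_solid_seq_def by blast

lemma normal_solid_seq_antimono:
  assumes "normal_solid_seq \<tau> V" "k \<le> m"
  shows "V m \<subseteq> V k"
proof (rule lift_Suc_antimono_le[of V, OF _ assms(2)])
  fix n
  have "0 \<in> V (Suc n)"
    using assms(1) unfolding normal_solid_seq_def by (blast intro: nhd0_zero_mem)
  then show "V (Suc n) \<subseteq> V n"
    using normal_solid_seq_add[OF assms(1)] by (metis add_0_right subsetI)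
qed

lemma normal_solid_seq_Inter_ideal:
  assumes "normal_solid_seq \<tau> V"
  shows "lattice_ideal (\<Inter>n. V n)"
  unfolding lattice_ideal_def
proof (intro conjI ballI solid_Inter)
  show "solid (V n)" "0 \<in> (\<Inter>n. V n)" for n
    using assms unfolding normal_solid_seq_def by (auto intro: nhd0_zero_mem)
  show "a + b \<in> (\<Inter>n. V n)" if "a \<in> (\<Inter>n. V n)" "b \<in> (\<Inter>n. V n)" for a b
    using that normal_solid_seq_add[OF assms] by blast
qed

lemma order_closed_INT:
  assumes "\<And>i. i \<in> I \<Longrightarrow> order_closed (V i)"
  shows "order_closed (\<Inter>i\<in>I. V i)"
  unfolding order_closed_def
proof (intro allI impI INT_I)
  fix F x i
  assume F: "F \<noteq> bot \<and> eventually (\<lambda>z. z \<in> (\<Inter>i\<in>I. V i)) F \<and> order_converges F x"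
    and i: "i \<in> I"
  then have "eventually (\<lambda>z. z \<in> V i) F"
    by (auto elim: eventually_mono)
  then show "x \<in> V i"
    using assms[OF i] F unfolding order_closed_def by blast
qed

lemma fatou_topology_normal_solid_seq_subset:
  assumes "fatou_topology \<tau>" and W: "\<And>k. nhd0 \<tau> (W k)"
  shows "\<exists>U. normal_solid_seq \<tau> U \<and> (\<forall>k. order_closed (U k)) \<and> (\<forall>k. U k \<subseteq> W k)"
proof -
  obtain g where g: "\<And>Z. nhd0 \<tau> Z \<Longrightarrow>
      nhd0 \<tau> (g Z) \<and> solid (g Z) \<and> order_closed (g Z) \<and> (\<forall>a\<in>g Z. \<forall>b\<in>g Z. a + b \<in> Z)"
    using fatou_topology_nhd0_half[OF assms(1)] by metis
  have g_subset: "g Z \<subseteq> Z" if "nhd0 \<tau> Z" for Z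
    using g[OF that] nhd0_zero_mem by (metis add_0_right subsetI)
  define U where "U = rec_nat (g (W 0)) (\<lambda>k S. g (W (Suc k) \<inter> S))"
  have U: "U 0 = g (W 0)" "U (Suc k) = g (W (Suc k) \<inter> U k)" for k
    by (simp_all add: U_def)
  have nhd0_U: "nhd0 \<tau> (U k)" for k
    by (induction k) (simp_all add: U g W nhd0_Int)
  have U_props: "solid (U k) \<and> order_closed (U k) \<and> U k \<subseteq> W k" for k
  proof (cases k)
    case 0
    then show ?thesis using g[OF W] g_subset[OF W] by (simp add: U)
  next
    case (Suc n)
    have "nhd0 \<tau> (W (Suc n) \<inter> U n)"
      using W nhd0_U by (rule nhd0_Int)
    then show ?thesis
      using g g_subset[of "W (Suc n) \<inter> U n"] Suc by (auto simp: U)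
  qed
  have "normal_solid_seq \<tau> U"
    unfolding normal_solid_seq_def
    using g[OF nhd0_Int[OF W nhd0_U]] by (auto simp: U nhd0_U U_props)
  then show ?thesis
    using U_props by blast
qed

lemma disj_compl_subset_carrier_top: "normal_solid_seq \<tau> V \<Longrightarrow> disj_compl (\<Inter>n. V n) \<subseteq> carrier_top \<tau>"
  unfolding carrier_top_def by blast

lemma carrier_top_order_dense:
  assumes arch: "archimedean_vl TYPE('a)" and ft: "fatou_topology (\<tau> :: 'a::{ordered_real_vector,lattice} topology)"
    and "y \<noteq> 0"
  shows "\<exists>w\<in>carrier_top \<tau>. 0 \<le> w \<and> w \<le> vl_abs y \<and> w \<noteq> 0"
proof -
  obtain G where "nhd0 \<tau> G" "y \<notin> G"
    using linear_topology_nhd0_not_mem[OF fatou_topology_linear[OF ft] \<open>y \<noteq> 0\<close>] by blast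
  then obtain U where U: "normal_solid_seq \<tau> U" "\<And>k. order_closed (U k)" "\<And>k. U k \<subseteq> G"
    using fatou_topology_normal_solid_seq_subset[OF ft \<open>nhd0 \<tau> G\<close>] by blast
  define N where "N = (\<Inter>k. U k)"
  have N: "lattice_ideal N" "order_closed N"
    unfolding N_def using normal_solid_seq_Inter_ideal[OF U(1)] order_closed_INT[OF U(2)] by simp_all
  have "y \<notin> N"
    using U(3) \<open>y \<notin> G\<close> unfolding N_def by blast
  then have "vl_abs y \<notin> N"
    using N(1) unfolding lattice_ideal_def by (metis solidD vl_abs_idem order_refl)
  then have "vl_abs y \<notin> disj_compl (disj_compl N)"
    using order_closed_ideal_double_disj_compl[OF arch N vl_abs_nonneg] by blast
  then obtain w where "w \<in> disj_compl N" "0 \<le> w" "w \<le> vl_abs y" "w \<noteq> 0"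
    using exists_disj_compl_below by (metis vl_abs_idem)
  then show ?thesis
    using disj_compl_subset_carrier_top[OF U(1)] unfolding N_def by blast
qed

lemma countable_subset_carrier_top:
  assumes ft: "fatou_topology \<tau>" and "countable A" and A: "A \<subseteq> carrier_top \<tau>"
  shows "\<exists>V. normal_solid_seq \<tau> V \<and> A \<subseteq> disj_compl (\<Inter>k. V k)"
proof (cases "A = {}")
  case True
  obtain V where "normal_solid_seq \<tau> V"
    using fatou_topology_normal_solid_seq_subset[OF ft linear_topology_nhd0_UNIV[OF fatou_topology_linear[OF ft]]]
    by blast
  with True show ?thesis
    by blast
next
  case False
  define a where "a = from_nat_into A"
  have "\<exists>V. normal_solid_seq \<tau> V \<and> a n \<in> disj_compl (\<Inter>k. V k)" for n
    using A from_nat_into[OF False] unfolding a_def carrier_top_def by blast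
  then obtain Vs where Vs: "\<And>n. normal_solid_seq \<tau> (Vs n)" "\<And>n. a n \<in> disj_compl (\<Inter>k. Vs n k)"
    by metis
  have "nhd0 \<tau> (\<Inter>n\<in>{..k}. Vs n k)" for k
    using Vs(1) unfolding normal_solid_seq_def by (simp add: nhd0_INT_atMost)
  then obtain U where U: "normal_solid_seq \<tau> U" "\<And>k. U k \<subseteq> (\<Inter>n\<in>{..k}. Vs n k)"
    using fatou_topology_normal_solid_seq_subset[OF ft, of "\<lambda>k. \<Inter>n\<in>{..k}. Vs n k"] by blast
  have "(\<Inter>k. U k) \<subseteq> (\<Inter>k. Vs n k)" for n
  proof (intro subsetI INT_I)
    fix x k assume "x \<in> (\<Inter>k. U k)"
    then have "x \<in> Vs n (max k n)"
      using U(2)[of "max k n"] by auto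
    then show "x \<in> Vs n k"
      using normal_solid_seq_antimono[OF Vs(1), of k "max k n"] by auto
  qed
  then have "a n \<in> disj_compl (\<Inter>k. U k)" for n
    using Vs(2) disj_compl_antimono by blast
  moreover have "A \<subseteq> range a"
    using range_from_nat_into[OF False \<open>countable A\<close>] unfolding a_def by simp
  ultimately show ?thesis
    using U(1) by blast
qed

lemma solid_disjoint_order_basis_carrier_top:
  assumes "archimedean_vl TYPE('a)" "fatou_topology (\<tau> :: 'a::{ordered_real_vector,lattice} topology)"
    and A: "order_basis (carrier_top \<tau>) A" and S: "solid S" "S \<subseteq> disj_compl A"
  shows "S \<subseteq> {0}"
proof
  fix y assume y: "y \<in> S"
  show "y \<in> {0}"
  proof (rule ccontr)
    assume "y \<notin> {0}"
    then obtain w where w: "w \<in> carrier_top \<tau>" "0 \<le> w" "w \<le> vl_abs y" "w \<noteq> 0"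
      using carrier_top_order_dense[OF assms(1,2)] by blast
    moreover have "w \<in> disj_compl A"
      using solid_nonneg_below[OF S(1) y w(2,3)] S(2) by blast
    ultimately have "w \<in> carrier_top \<tau> \<inter> disj_compl A"
      by blast
    then show False
      using A w(4) unfolding order_basis_def by auto
  qed
qed

theorem proposition3p15:
  fixes \<tau> :: "'a::{ordered_real_vector,lattice} topology"
  assumes "archimedean_vl TYPE('a)"
    and "fatou_topology \<tau>"
    and "\<exists>A. countable A \<and> order_basis (carrier_top \<tau>) A"
  shows "carrier_top \<tau> = UNIV"
proof -
  obtain A where "countable A" and A: "order_basis (carrier_top \<tau>) A"
    using assms(3) by blast
  moreover have "A \<subseteq> carrier_top \<tau>"
    using A unfolding order_basis_def by simp
  ultimately obtain V where V: "normal_solid_seq \<tau> V" and "A \<subseteq> disj_compl (\<Inter>k. V k)"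
    using countable_subset_carrier_top[OF assms(2)] by blast
  then have "(\<Inter>k. V k) \<subseteq> disj_compl A"
    by (simp add: disj_compl_sym)
  moreover have "solid (\<Inter>k. V k)"
    using normal_solid_seq_Inter_ideal[OF V] unfolding lattice_ideal_def by blast
  ultimately have "disj_compl (\<Inter>k. V k) = UNIV"
    by (intro disj_compl_subset_zero solid_disjoint_order_basis_carrier_top[OF assms(1,2) A])
  then show ?thesis
    using disj_compl_subset_carrier_top[OF V] by blast
qed

end
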